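(* Let $n,k$ be positive integers and $i\in\{1,\ldots,n\}$ such that $k\cdot\frac{i}{n}\cdot \frac{n-i}{n}< 1$, $n\ge 8k$, and $i>n/2$. If $H\sim\text{Hyp}(n,i,k)$, then $\mathbb{P}(H \ge ik/n) \ge \frac{k}{n}$.
   Context: $\text{Hyp}(n,i,k)$ denotes the hypergeometric distribution: the number of black marbles in a sample without replacement of size $k$ from an urn with $i$ black and $n-i$ white marbles, i.e. $\mathbb{P}(H=j)=\binom{i}{j}\binom{n-i}{k-j}/\binom{n}{k}$. *)

theory Defs
  imports Complex_Main
begin

definition hyp_pmf :: "nat \<Rightarrow> nat \<Rightarrow> nat \<Rightarrow> nat \<Rightarrow> real" where
  "hyp_pmf n i k j =
     (if j \<le> k then real (i choose j) * real ((n - i) choose (k - j)) / real (n choose k) else 0)"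

definition hyp_tail :: "nat \<Rightarrow> nat \<Rightarrow> nat \<Rightarrow> real \<Rightarrow> real" where
  "hyp_tail n i k t = (\<Sum>j \<in> {j. j \<le> k \<and> real j \<ge> t}. hyp_pmf n i k j)"

end

theory Submission
  imports Defs "HOL-Analysis.Complex_Transcendental"
begin

(* Let w = n - i be the number of white marbles. If k w < n, the threshold i k / n = k - k w / n
  exceeds k - 1, and P(H = k) = C(i,k) / C(n,k) \<ge> ((i-k+1)/(n-k+1))^k \<ge> 1/8 \<ge> k/n; the middle
  bound is (1 + d)^k \<le> exp (k d) \<le> exp 2 < 8 for d = w / (i-k+1). Otherwise the threshold is at
  most k - 1, and P(H = k-1) = (k/n) w C(i,k-1) / C(n-1,k-1), where w \<ge> 8 and the binomial
  ratio is again at least 1/8: for k \<le> 4 because each of its k - 1 factors is at least 1/2,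
  for k \<ge> 5 because k i w < n^2 forces w \<le> n/3. *)

lemma binomial_ratio_ge_power:
  fixes a b m :: nat
  assumes "m \<le> a" "a \<le> b"
  shows "(real (a - m + 1) / real (b - m + 1)) ^ m \<le> real (a choose m) / real (b choose m)"
proof -
  have factor_le: "real (a - m + 1) / real (b - m + 1) \<le> real (a - j) / real (b - j)" if "j < m" for j
  proof -
    have "real (a - j) * real (b - m + 1) - real (a - m + 1) * real (b - j)
        = (real m - 1 - real j) * (real b - real a)"
      using that assms by (simp add: of_nat_diff algebra_simps)
    moreover have "0 \<le> (real m - 1 - real j) * (real b - real a)"
      using that assms by simp
    ultimately have "real (a - m + 1) * real (b - j) \<le> real (a - j) * real (b - m + 1)"
      by linarith
    then show ?thesis
      using that assms by (simp add: divide_simps)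
  qed
  have "(real (a - m + 1) / real (b - m + 1)) ^ m = (\<Prod>j<m. real (a - m + 1) / real (b - m + 1))"
    by simp
  also have "\<dots> \<le> (\<Prod>j<m. real (a - j) / real (b - j))"
    by (intro prod_mono conjI divide_nonneg_nonneg of_nat_0_le_iff factor_le) simp
  also have "\<dots> = (\<Prod>j<m. real (a - j) / real (m - j)) / (\<Prod>j<m. real (b - j) / real (m - j))"
    by (simp add: prod_dividef[symmetric])
  also have "\<dots> = real (a choose m) / real (b choose m)"
    using assms by (simp add: binomial_altdef_of_nat atLeast0LessThan)
  finally show ?thesis .
qed

lemma exp_two_le_eight: "exp (2::real) \<le> 8"
proof -
  have "exp (2::real) = exp 1 * exp 1"
    by (simp flip: exp_add)
  also have "\<dots> \<le> (272/100) * (272/100)"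
    using e_less_272 by (intro mult_mono) auto
  finally show ?thesis
    by simp
qed

lemma one_plus_power_le_eight:
  fixes d :: real
  assumes "0 \<le> d" and "real m * d \<le> 2 \<or> m \<le> 3 \<and> d \<le> 1"
  shows "(1 + d) ^ m \<le> 8"
  using assms(2)
proof
  assume "real m * d \<le> 2"
  have "(1 + d) ^ m \<le> exp d ^ m"
    using assms(1) by (intro power_mono) auto
  also have "\<dots> = exp (real m * d)"
    by (simp add: exp_of_nat_mult)
  also have "\<dots> \<le> 8"
    using \<open>real m * d \<le> 2\<close> exp_two_le_eight by (meson exp_le_cancel_iff order_trans)
  finally show ?thesis .
next
  assume "m \<le> 3 \<and> d \<le> 1"
  then have "(1 + d) ^ m \<le> 2 ^ m"
    using assms(1) by (intro power_mono) auto
  also have "\<dots> \<le> 2 ^ 3"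
    using \<open>m \<le> 3 \<and> d \<le> 1\<close> by (intro power_increasing) auto
  finally show ?thesis
    by simp
qed

lemma one_eighth_le_binomial_ratio:
  fixes a b m :: nat
  assumes "m \<le> a" "a \<le> b"
    and "m * (b - a) \<le> 2 * (a + 1 - m) \<or> m \<le> 3 \<and> b - a \<le> a + 1 - m"
  shows "1/8 \<le> real (a choose m) / real (b choose m)"
proof -
  define d where "d = real (b - a) / real (a + 1 - m)"
  have pos: "0 < real (a + 1 - m)"
    using assms(1) by simp
  have "0 \<le> d"
    by (simp add: d_def)
  have "real m * d \<le> 2 \<or> m \<le> 3 \<and> d \<le> 1"
    using assms(3) pos unfolding d_def
    by (auto simp: field_simps simp flip: of_nat_mult of_nat_le_iff)
  then have "(1 + d) ^ m \<le> 8"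
    by (rule one_plus_power_le_eight[OF \<open>0 \<le> d\<close>])
  moreover have "0 < (1 + d) ^ m"
    using \<open>0 \<le> d\<close> by simp
  ultimately have "1/8 \<le> (1 / (1 + d)) ^ m"
    by (simp add: power_one_over divide_simps)
  also have "1 / (1 + d) = real (a - m + 1) / real (b - m + 1)"
    using assms(1,2) pos by (simp add: d_def field_simps of_nat_diff)
  also have "\<dots> ^ m \<le> real (a choose m) / real (b choose m)"
    using assms(1,2) by (rule binomial_ratio_ge_power)
  finally show ?thesis .
qed

lemma hyp_pmf_le_hyp_tail:
  assumes "j \<le> k" "t \<le> real j"
  shows "hyp_pmf n i k j \<le> hyp_tail n i k t"
  unfolding hyp_tail_def
proof (rule member_le_sum)
  show "finite {j. j \<le> k \<and> t \<le> real j}"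
    by (rule finite_subset[of _ "{..k}"]) auto
qed (use assms in \<open>auto simp: hyp_pmf_def\<close>)

lemma hyp_pmf_pred_top:
  assumes "0 < k"
  shows "hyp_pmf n i k (k - 1)
    = real k / real n * (real (n - i) * (real (i choose (k - 1)) / real ((n - 1) choose (k - 1))))"
proof -
  have "hyp_pmf n i k (k - 1) = real k * (real (n - i) * real (i choose (k - 1)))
      / (real k * real (n choose k))"
    using assms by (simp add: hyp_pmf_def)
  also have "real k * real (n choose k) = real n * real ((n - 1) choose (k - 1))"
    using times_binomial_minus1_eq[OF assms, of n] by (metis of_nat_mult)
  finally show ?thesis
    by simp
qed

lemma hyp_pmf_top_le_hyp_tail_mean:
  assumes "i \<le> n"
  shows "hyp_pmf n i k k \<le> hyp_tail n i k (real i * real k / real n)"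
proof (rule hyp_pmf_le_hyp_tail)
  have "real i * real k \<le> real n * real k"
    using assms by (intro mult_right_mono) auto
  then show "real i * real k / real n \<le> real k"
    by (cases "n = 0") (simp_all add: divide_le_eq mult.commute)
qed simp

lemma hyp_pmf_pred_top_le_hyp_tail_mean:
  assumes "0 < k" "0 < n" "n \<le> k * (n - i)"
  shows "hyp_pmf n i k (k - 1) \<le> hyp_tail n i k (real i * real k / real n)"
proof (rule hyp_pmf_le_hyp_tail)
  have "n + k * i \<le> k * n"
    using assms(2,3) by (cases "i \<le> n") (auto simp: diff_mult_distrib2)
  then have "real n + real k * real i \<le> real k * real n"
    by (metis of_nat_add of_nat_mult of_nat_le_iff)
  then show "real i * real k / real n \<le> real (k - 1)"
    using assms(1,2) by (simp add: field_simps of_nat_diff)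
qed simp

lemma one_eighth_le_hyp_pmf_top:
  fixes n i k :: nat
  assumes "k * (n - i) < n" "n < 2 * i" "i \<le> n" "8 * k \<le> n"
  shows "1/8 \<le> hyp_pmf n i k k"
proof -
  define w where "w = n - i"
  have "k * w \<le> 2 * (i + 1 - k)"
  proof (cases "k \<le> 2")
    case True
    then have "k * w \<le> 2 * w"
      by (rule mult_right_mono) simp
    then show ?thesis
      using True assms(2,3) unfolding w_def by linarith
  next
    case False
    then have "3 * w \<le> k * w"
      by (intro mult_right_mono) auto
    then show ?thesis
      using assms unfolding w_def by linarith
  qed
  then have "1/8 \<le> real (i choose k) / real (n choose k)"
    using assms unfolding w_def by (intro one_eighth_le_binomial_ratio) auto
  then show ?thesis
    by (simp add: hyp_pmf_def)
qed

lemma three_mul_diff_le_of_product_bound: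
  fixes n i k :: nat
  assumes "5 \<le> k" "n < 2 * i" "i \<le> n"
    and "real k * real i * real (n - i) < real n * real n"
  shows "3 * (n - i) \<le> n"
proof (rule ccontr)
  assume "\<not> 3 * (n - i) \<le> n"
  then have "0 < (2 * real n - 3 * real i) * (3 * real i - real n)"
    using assms(2,3) by (intro mult_pos_pos) auto
  then have "2 * (real n * real n) < 9 * (real i * real (n - i))"
    using assms(3) by (simp add: of_nat_diff algebra_simps)
  moreover have "5 * (real i * real (n - i)) \<le> real k * (real i * real (n - i))"
    using assms(1) by (intro mult_right_mono) auto
  moreover have "0 \<le> real n * real n"
    by simp
  ultimately show False
    using assms(4) by (simp add: mult.assoc)
qed

lemma one_le_scaled_binomial_ratio:
  fixes n i k :: nat
  assumes "n \<le> k * (n - i)" "n < 2 * i" "i \<le> n" "8 * k \<le> n"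
    and "real k * real i * real (n - i) < real n * real n"
  shows "1 \<le> real (n - i) * (real (i choose (k - 1)) / real ((n - 1) choose (k - 1)))"
proof -
  define w where "w = n - i"
  have "0 < k"
    using assms(1-3) by (cases k) auto
  have "8 \<le> w"
    using assms(1,4) \<open>0 < k\<close> unfolding w_def by (metis mult.commute mult_le_cancel1 order_trans)
  have "k - 1 \<le> 3 \<and> n - 1 - i \<le> i + 1 - (k - 1)
      \<or> (k - 1) * (n - 1 - i) \<le> 2 * (i + 1 - (k - 1))"
  proof (cases "k \<le> 4")
    case True
    then show ?thesis
      using assms(2,3) by linarith
  next
    case False
    then have "3 * w \<le> n"
      unfolding w_def using assms(2,3,5) by (intro three_mul_diff_le_of_product_bound) auto
    then have "2 * real n \<le> 3 * real i"
      using assms(3) unfolding w_def by linarith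
    have "real n * (2 * (real k * real w)) = 2 * real n * (real k * real w)"
      by (simp add: ac_simps)
    also have "\<dots> \<le> 3 * real i * (real k * real w)"
      using \<open>2 * real n \<le> 3 * real i\<close> by (rule mult_right_mono) simp
    also have "\<dots> < real n * (3 * real n)"
      using assms(5) unfolding w_def by (simp add: ac_simps)
    finally have "2 * (real k * real w) < 3 * real n"
      by (rule mult_left_less_imp_less) simp
    then have "2 * (k * w) < 3 * n"
      by (simp flip: of_nat_mult)
    moreover have "(k - 1) * (n - 1 - i) + k + w = k * w + 1"
    proof -
      have "n - 1 - i = w - 1"
        unfolding w_def by simp
      then show ?thesis
        using \<open>0 < k\<close> \<open>8 \<le> w\<close> by (cases k; cases w) (auto simp: algebra_simps)
    qed
    ultimately have "(k - 1) * (n - 1 - i) \<le> 2 * (i + 1 - (k - 1))"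
      using \<open>3 * w \<le> n\<close> assms(3,4) unfolding w_def by linarith
    then show ?thesis ..
  qed
  then have "1/8 \<le> real (i choose (k - 1)) / real ((n - 1) choose (k - 1))"
    using assms(2,4) \<open>8 \<le> w\<close> unfolding w_def by (intro one_eighth_le_binomial_ratio) auto
  moreover have "8 \<le> real (n - i)"
    using \<open>8 \<le> w\<close> unfolding w_def by simp
  ultimately have "8 * (1/8) \<le> real (n - i) * (real (i choose (k - 1)) / real ((n - 1) choose (k - 1)))"
    by (intro mult_mono) auto
  then show ?thesis
    by (simp only: mult_cancel_left1 times_divide_eq_right)
qed

lemma hyp_pmf_pred_top_ge:
  fixes n i k :: nat
  assumes "0 < k" "n \<le> k * (n - i)" "n < 2 * i" "i \<le> n" "8 * k \<le> n"
    and "real k * real i * real (n - i) < real n * real n"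
  shows "real k / real n \<le> hyp_pmf n i k (k - 1)"
proof -
  define r where "r = real (n - i) * (real (i choose (k - 1)) / real ((n - 1) choose (k - 1)))"
  have "1 \<le> r"
    unfolding r_def using assms(2-6) by (rule one_le_scaled_binomial_ratio)
  then have "real k / real n \<le> real k / real n * r"
    using mult_left_mono[of 1 r "real k / real n"] by simp
  also have "\<dots> = hyp_pmf n i k (k - 1)"
    unfolding r_def by (rule hyp_pmf_pred_top[OF assms(1), symmetric])
  finally show ?thesis .
qed

theorem lemma11:
  fixes n k i :: nat
  assumes "n > 0" and "k > 0"
    and "1 \<le> i" and "i \<le> n"
    and "real k * (real i / real n) * (real (n - i) / real n) < 1"
    and "n \<ge> 8 * k"
    and "real i > real n / 2"
  shows "hyp_tail n i k (real i * real k / real n) \<ge> real k / real n"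
proof -
  have "n < 2 * i"
    using assms(7) by linarith
  have product_bound: "real k * real i * real (n - i) < real n * real n"
    using assms(1,5) by (simp add: field_simps)
  show ?thesis
  proof (cases "k * (n - i) < n")
    case True
    have "real k / real n \<le> 1/8"
      using assms(1,6) by (simp add: field_simps)
    also have "\<dots> \<le> hyp_pmf n i k k"
      using True \<open>n < 2 * i\<close> assms(4,6) by (rule one_eighth_le_hyp_pmf_top)
    also have "\<dots> \<le> hyp_tail n i k (real i * real k / real n)"
      using assms(4) by (rule hyp_pmf_top_le_hyp_tail_mean)
    finally show ?thesis .
  next
    case False
    have "real k / real n \<le> hyp_pmf n i k (k - 1)"
      using assms(2) False \<open>n < 2 * i\<close> assms(4,6) product_bound
      by (intro hyp_pmf_pred_top_ge) auto
    also have "\<dots> \<le> hyp_tail n i k (real i * real k / real n)"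
      using assms(2,1) False by (intro hyp_pmf_pred_top_le_hyp_tail_mean) auto
    finally show ?thesis .
  qed
qed

end
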